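(* Let $(\Omega,\mathcal F,P)$ be a probability space and let $\mathcal F_1,\mathcal F_2\subset\mathcal F$ be sub-$\sigma$-fields. - (a) If $C_1\subset C_2$ are measurable and $\mathcal F_1,\mathcal F_2$ are a nonsingular pair within $C_2$, then they are a nonsingular pair within $C_1$. - (b) If $C_1,C_2,\dots$ are pairwise disjoint measurable sets with union $C$, and $\mathcal F_1,\mathcal F_2$ are a nonsingular pair within each $C_k$, then they are a nonsingular pair within $C$. - (c) Let $C$ be measurable and let $\mathcal E_1\subset\mathcal F$ be a sub-$\sigma$-field such that for every $E\in\mathcal E_1$ there exists $A\in\mathcal F_1$ with $A\cap C=E\cap C$. If $\mathcal F_1,\mathcal F_2$ are a nonsingular pair within $C$, then $\mathcal E_1,\mathcal F_2$ are a nonsingular pair within $C$.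
   Context: Let $(\Omega,\mathcal F,P)$ be a probability space and $C\in\mathcal F$. Two sub-$\sigma$-fields $\mathcal F_1,\mathcal F_2\subset\mathcal F$ are a nonsingular pair within $C$ if there exists a measurable function $f:\Omega\times\Omega\to[0,\infty)$ such that $P(A\cap B\cap C)=\int_{A\times B} f(\omega_1,\omega_2)\,P(d\omega_1)P(d\omega_2)$ for all $A\in\mathcal F_1$, $B\in\mathcal F_2$. Equivalently, there exists a measurable $g:C\times C\to[0,\infty)$ with $P(A\cap B\cap C)=\int_{(A\cap C)\times(B\cap C)} g\,dP\,dP$ for all such $A,B$. *)

theory Defs
  imports "HOL-Probability.Probability"
begin

definition nonsingular_pair_within :: "'a measure \<Rightarrow> 'a measure \<Rightarrow> 'a measure \<Rightarrow> 'a set \<Rightarrow> bool" where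
  "nonsingular_pair_within M F1 F2 C \<longleftrightarrow>
     (\<exists>f \<in> borel_measurable (M \<Otimes>\<^sub>M M).
        (\<forall>w \<in> space (M \<Otimes>\<^sub>M M). 0 \<le> f w) \<and>
        (\<forall>A \<in> sets F1. \<forall>B \<in> sets F2.
           emeasure M (A \<inter> B \<inter> C) = (\<integral>\<^sup>+ w \<in> A \<times> B. ennreal (f w) \<partial>(M \<Otimes>\<^sub>M M))))"

end

theory Submission
  imports Defs
begin

(* Let \<nu>\<^sub>C be the image of P restricted to C under the diagonal map \<omega> \<mapsto> (\<omega>, \<omega>), taken on
   F1 \<Otimes> F2. By Radon-Nikodym, F1 and F2 are a nonsingular pair within C iff \<nu>\<^sub>C is absolutely
   continuous with respect to P \<Otimes> P on F1 \<Otimes> F2, i.e. iff every (P \<Otimes> P)-null S \<in> F1 \<Otimes> F2 meets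
   the diagonal over C in a P-null set. Parts (a) and (b) are immediate from this characterisation.
   For (c), every set of E1 \<Otimes> F2 agrees on C \<times> C with a set S of F1 \<Otimes> F2, so it suffices that
   \<nu>\<^sub>C(S) = 0 as soon as S \<inter> C \<times> C is (P \<Otimes> P)-null. On F1 \<Otimes> F2 the restriction of P \<Otimes> P to
   C \<times> C has density p\<^sub>1(x) p\<^sub>2(y), where p\<^sub>i = E[1\<^sub>C | F\<^sub>i]; hence such an S is null outside
   Z\<^sub>1 \<times> \<Omega> \<union> \<Omega> \<times> Z\<^sub>2 with Z\<^sub>i = {p\<^sub>i = 0}, and \<nu>\<^sub>C vanishes there because
   P(Z\<^sub>i \<inter> C) = \<integral>\<^bsub>Z\<^sub>i\<^esub> p\<^sub>i dP = 0. *)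

lemma subalgebra_pair_measure:
  assumes "subalgebra M1 F1" and "subalgebra M2 F2"
  shows "subalgebra (M1 \<Otimes>\<^sub>M M2) (F1 \<Otimes>\<^sub>M F2)"
proof -
  have space: "space (F1 \<Otimes>\<^sub>M F2) = space (M1 \<Otimes>\<^sub>M M2)"
    using assms by (simp add: subalgebra_def space_pair_measure)
  have "{a \<times> b | a b. a \<in> sets F1 \<and> b \<in> sets F2} \<subseteq> sets (M1 \<Otimes>\<^sub>M M2)"
    using assms by (auto simp: subalgebra_def)
  then have "sets (F1 \<Otimes>\<^sub>M F2) \<subseteq> sets (M1 \<Otimes>\<^sub>M M2)"
    using assms by (simp add: sets_pair_measure subalgebra_def sigma_sets_mono)
  with space show ?thesis
    by (simp add: subalgebra_def)
qed

lemma measure_eqI_Times: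
  assumes "sets N1 = sets (F1 \<Otimes>\<^sub>M F2)" and "sets N2 = sets (F1 \<Otimes>\<^sub>M F2)"
    and "\<And>A B. A \<in> sets F1 \<Longrightarrow> B \<in> sets F2 \<Longrightarrow> emeasure N1 (A \<times> B) = emeasure N2 (A \<times> B)"
    and "emeasure N1 (space F1 \<times> space F2) \<noteq> \<infinity>"
  shows "N1 = N2"
  by (rule measure_eqI_generator_eq[OF Int_stable_pair_measure_generator[of F1 F2],
        where \<Omega> = "space F1 \<times> space F2" and A = "\<lambda>_. space F1 \<times> space F2"])
     (use assms in \<open>auto simp: sets_pair_measure dest: sets.sets_into_space\<close>)

lemma ex_sets_pair_measure_same_trace:
  assumes "space E = space F" and "C \<subseteq> space F"
    and trace: "\<And>X. X \<in> sets E \<Longrightarrow> \<exists>A \<in> sets F. A \<inter> C = X \<inter> C"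
    and "T \<in> sets (E \<Otimes>\<^sub>M G)"
  shows "\<exists>S \<in> sets (F \<Otimes>\<^sub>M G). T \<inter> (C \<times> space G) = S \<inter> (C \<times> space G)"
proof -
  have "T \<in> sigma_sets (space F \<times> space G) {a \<times> b | a b. a \<in> sets E \<and> b \<in> sets G}"
    using assms by (simp add: sets_pair_measure)
  then show ?thesis
  proof induct
    case (Basic T)
    then obtain X B where "T = X \<times> B" "X \<in> sets E" "B \<in> sets G"
      by blast
    moreover obtain A where "A \<in> sets F" "A \<inter> C = X \<inter> C"
      using trace \<open>X \<in> sets E\<close> by blast
    ultimately have "T \<inter> (C \<times> space G) = (A \<times> B) \<inter> (C \<times> space G)" and "A \<times> B \<in> sets (F \<Otimes>\<^sub>M G)"
      by (auto simp: Times_Int_Times)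
    then show ?case
      by blast
  next
    case Empty
    show ?case
      by (intro bexI[of _ "{}"]) auto
  next
    case (Compl T)
    then obtain S where "S \<in> sets (F \<Otimes>\<^sub>M G)" and "T \<inter> (C \<times> space G) = S \<inter> (C \<times> space G)"
      by blast
    then have "(space F \<times> space G - T) \<inter> (C \<times> space G) = (space (F \<Otimes>\<^sub>M G) - S) \<inter> (C \<times> space G)"
      and "space (F \<Otimes>\<^sub>M G) - S \<in> sets (F \<Otimes>\<^sub>M G)"
      using \<open>C \<subseteq> space F\<close> by (auto simp: space_pair_measure)
    then show ?case
      by blast
  next
    case (Union T)
    then obtain S where "\<And>i. S i \<in> sets (F \<Otimes>\<^sub>M G)" and "\<And>i. T i \<inter> (C \<times> space G) = S i \<inter> (C \<times> space G)"
      by metis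
    then have "(\<Union>i. T i) \<inter> (C \<times> space G) = (\<Union>i. S i) \<inter> (C \<times> space G)" and "(\<Union>i. S i) \<in> sets (F \<Otimes>\<^sub>M G)"
      by blast+
    then show ?case
      by blast
  qed
qed

lemma (in sigma_finite_subalgebra) set_nn_integral_nn_cond_exp_indicator:
  assumes "A \<in> sets F" and [measurable]: "C \<in> sets M"
  shows "(\<integral>\<^sup>+ x \<in> A. nn_cond_exp M F (indicator C) x \<partial>M) = emeasure M (A \<inter> C)"
proof -
  have [measurable]: "A \<in> sets M"
    using assms(1) subalg by (auto simp: subalgebra_def)
  have "(\<integral>\<^sup>+ x \<in> A. nn_cond_exp M F (indicator C) x \<partial>M) = (\<integral>\<^sup>+ x. indicator A x * indicator C x \<partial>M)"
    using assms(1) by (simp add: mult.commute nn_cond_exp_intg)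
  also have "\<dots> = emeasure M (A \<inter> C)"
    by (simp add: indicator_inter_arith[symmetric])
  finally show ?thesis .
qed

lemma (in sigma_finite_subalgebra) emeasure_nn_cond_exp_indicator_zero:
  assumes "C \<in> sets M"
  shows "emeasure M ({x \<in> space M. nn_cond_exp M F (indicator C) x = 0} \<inter> C) = 0"
proof -
  define Z where "Z = {x \<in> space M. nn_cond_exp M F (indicator C) x = 0}"
  have "Z = {x \<in> space F. nn_cond_exp M F (indicator C) x = 0}"
    using subalg by (simp add: Z_def subalgebra_def)
  then have "Z \<in> sets F"
    by simp
  then have "emeasure M (Z \<inter> C) = (\<integral>\<^sup>+ x \<in> Z. nn_cond_exp M F (indicator C) x \<partial>M)"
    using assms by (simp add: set_nn_integral_nn_cond_exp_indicator)
  also have "\<dots> = (\<integral>\<^sup>+ x. 0 \<partial>M)"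
    by (rule nn_integral_cong) (simp add: Z_def indicator_def)
  finally show ?thesis
    by (simp add: Z_def)
qed

lemma emeasure_restr_to_subalg_density:
  assumes "subalgebra N F" and "u \<in> borel_measurable N" and "T \<in> sets F"
  shows "emeasure (restr_to_subalg (density N u) F) T = (\<integral>\<^sup>+ x \<in> T. u x \<partial>N)"
proof -
  have "subalgebra (density N u) F"
    using assms(1) by (simp add: subalgebra_def)
  then show ?thesis
    using assms by (auto simp: emeasure_restr_to_subalg emeasure_density subalgebra_def)
qed

lemma (in sigma_finite_measure) nn_integral_pair_measure_mult:
  assumes [measurable]: "f \<in> borel_measurable M1" "g \<in> borel_measurable M"
  shows "(\<integral>\<^sup>+ w. f (fst w) * g (snd w) \<partial>(M1 \<Otimes>\<^sub>M M)) = (\<integral>\<^sup>+ x. f x \<partial>M1) * (\<integral>\<^sup>+ y. g y \<partial>M)"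
proof -
  have "(\<integral>\<^sup>+ w. f (fst w) * g (snd w) \<partial>(M1 \<Otimes>\<^sub>M M)) = (\<integral>\<^sup>+ x. \<integral>\<^sup>+ y. f x * g y \<partial>M \<partial>M1)"
    by (subst nn_integral_fst[symmetric]) simp_all
  also have "\<dots> = (\<integral>\<^sup>+ x. f x * (\<integral>\<^sup>+ y. g y \<partial>M) \<partial>M1)"
    by (simp add: nn_integral_cmult)
  also have "\<dots> = (\<integral>\<^sup>+ x. f x \<partial>M1) * (\<integral>\<^sup>+ y. g y \<partial>M)"
    by (simp add: nn_integral_multc)
  finally show ?thesis .
qed

definition diagonal_measure :: "'a measure \<Rightarrow> 'a measure \<Rightarrow> 'a measure \<Rightarrow> 'a set \<Rightarrow> ('a \<times> 'a) measure" where
  "diagonal_measure M F1 F2 C = distr (density M (indicator C)) (F1 \<Otimes>\<^sub>M F2) (\<lambda>w. (w, w))"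

lemma sets_diagonal_measure:
  "sets (diagonal_measure M F1 F2 C) = sets (F1 \<Otimes>\<^sub>M F2)"
  by (simp add: diagonal_measure_def)

context
  fixes M F1 F2 :: "'a measure"
  assumes finite: "finite_measure M" and sub1: "subalgebra M F1" and sub2: "subalgebra M F2"
begin

lemma sets_diagonal_vimage:
  assumes "S \<in> sets (F1 \<Otimes>\<^sub>M F2)"
  shows "{w \<in> space M. (w, w) \<in> S} \<in> sets M"
proof -
  have "(\<lambda>w. (w, w)) \<in> M \<rightarrow>\<^sub>M F1 \<Otimes>\<^sub>M F2"
    using sub1 sub2 by (intro measurable_Pair) (auto simp: subalgebra_def measurable_def)
  then show ?thesis
    using assms by measurable
qed

lemma emeasure_diagonal_measure:
  assumes "C \<in> sets M" and "S \<in> sets (F1 \<Otimes>\<^sub>M F2)"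
  shows "emeasure (diagonal_measure M F1 F2 C) S = emeasure M ({w \<in> space M. (w, w) \<in> S} \<inter> C)"
proof -
  have "(\<lambda>w. (w, w)) \<in> density M (indicator C) \<rightarrow>\<^sub>M F1 \<Otimes>\<^sub>M F2"
    using sub1 sub2 by (intro measurable_Pair) (auto simp: subalgebra_def measurable_def)
  moreover have "(\<lambda>w. (w, w)) -` S \<inter> space M = {w \<in> space M. (w, w) \<in> S}"
    by auto
  ultimately show ?thesis
    using assms sets_diagonal_vimage[OF assms(2)]
    by (simp add: diagonal_measure_def emeasure_distr emeasure_restricted Int_commute)
qed

lemma emeasure_diagonal_measure_Times:
  assumes "C \<in> sets M" and "A \<in> sets F1" and "B \<in> sets F2"
  shows "emeasure (diagonal_measure M F1 F2 C) (A \<times> B) = emeasure M (A \<inter> B \<inter> C)"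
proof -
  have "{w \<in> space M. (w, w) \<in> A \<times> B} = A \<inter> B"
    using assms sub1 sets.sets_into_space[of A F1] by (auto simp: subalgebra_def)
  then show ?thesis
    using assms by (simp add: emeasure_diagonal_measure)
qed

lemma finite_measure_diagonal_measure:
  assumes "C \<in> sets M"
  shows "finite_measure (diagonal_measure M F1 F2 C)"
proof (rule finite_measureI)
  have "space (diagonal_measure M F1 F2 C) \<in> sets (F1 \<Otimes>\<^sub>M F2)"
    by (simp add: diagonal_measure_def)
  then show "emeasure (diagonal_measure M F1 F2 C) (space (diagonal_measure M F1 F2 C)) \<noteq> \<infinity>"
    using assms sets_diagonal_vimage finite
    by (simp add: emeasure_diagonal_measure finite_measure.emeasure_finite)
qed

lemma nonsingular_pair_withinD:
  assumes C: "C \<in> sets M" and "nonsingular_pair_within M F1 F2 C"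
    and S: "S \<in> sets (F1 \<Otimes>\<^sub>M F2)" and null: "S \<in> null_sets (M \<Otimes>\<^sub>M M)"
  shows "{w \<in> space M. (w, w) \<in> S} \<inter> C \<in> null_sets M"
proof -
  obtain f where f: "f \<in> borel_measurable (M \<Otimes>\<^sub>M M)"
    and rect: "\<And>A B. A \<in> sets F1 \<Longrightarrow> B \<in> sets F2 \<Longrightarrow>
      emeasure M (A \<inter> B \<inter> C) = (\<integral>\<^sup>+ w \<in> A \<times> B. ennreal (f w) \<partial>(M \<Otimes>\<^sub>M M))"
    using assms(2) unfolding nonsingular_pair_within_def by blast
  have sub: "subalgebra (M \<Otimes>\<^sub>M M) (F1 \<Otimes>\<^sub>M F2)"
    by (rule subalgebra_pair_measure[OF sub1 sub2])
  have f': "(\<lambda>w. ennreal (f w)) \<in> borel_measurable (M \<Otimes>\<^sub>M M)"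
    using f by simp
  let ?D = "restr_to_subalg (density (M \<Otimes>\<^sub>M M) (\<lambda>w. ennreal (f w))) (F1 \<Otimes>\<^sub>M F2)"
  have "diagonal_measure M F1 F2 C = ?D"
  proof (rule measure_eqI_Times)
    show "sets (diagonal_measure M F1 F2 C) = sets (F1 \<Otimes>\<^sub>M F2)"
      by (rule sets_diagonal_measure)
    have "subalgebra (density (M \<Otimes>\<^sub>M M) (\<lambda>w. ennreal (f w))) (F1 \<Otimes>\<^sub>M F2)"
      using sub by (simp add: subalgebra_def)
    then show "sets ?D = sets (F1 \<Otimes>\<^sub>M F2)"
      by (rule sets_restr_to_subalg)
    show "emeasure (diagonal_measure M F1 F2 C) (A \<times> B) = emeasure ?D (A \<times> B)"
      if "A \<in> sets F1" and "B \<in> sets F2" for A B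
    proof -
      have "emeasure (diagonal_measure M F1 F2 C) (A \<times> B) = emeasure M (A \<inter> B \<inter> C)"
        by (rule emeasure_diagonal_measure_Times[OF C that])
      also have "\<dots> = (\<integral>\<^sup>+ w \<in> A \<times> B. ennreal (f w) \<partial>(M \<Otimes>\<^sub>M M))"
        by (rule rect[OF that])
      also have "\<dots> = emeasure ?D (A \<times> B)"
        using that by (intro emeasure_restr_to_subalg_density[OF sub f', symmetric]) simp
      finally show ?thesis .
    qed
    show "emeasure (diagonal_measure M F1 F2 C) (space F1 \<times> space F2) \<noteq> \<infinity>"
      using finite_measure_diagonal_measure[OF C] by (simp add: finite_measure.emeasure_finite)
  qed
  then have "emeasure M ({w \<in> space M. (w, w) \<in> S} \<inter> C) = emeasure ?D S"
    using emeasure_diagonal_measure[OF C S] by simp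
  also have "\<dots> = (\<integral>\<^sup>+ w \<in> S. ennreal (f w) \<partial>(M \<Otimes>\<^sub>M M))"
    by (rule emeasure_restr_to_subalg_density[OF sub f' S])
  also have "\<dots> = 0"
    using null by (rule nn_integral_null_set)
  finally show ?thesis
    using C sets_diagonal_vimage[OF S] by (intro null_setsI) auto
qed

lemma nonsingular_pair_withinI:
  assumes C: "C \<in> sets M"
    and null: "\<And>S. S \<in> sets (F1 \<Otimes>\<^sub>M F2) \<Longrightarrow> S \<in> null_sets (M \<Otimes>\<^sub>M M) \<Longrightarrow>
      {w \<in> space M. (w, w) \<in> S} \<inter> C \<in> null_sets M"
  shows "nonsingular_pair_within M F1 F2 C"
proof -
  let ?R = "restr_to_subalg (M \<Otimes>\<^sub>M M) (F1 \<Otimes>\<^sub>M F2)" and ?N = "diagonal_measure M F1 F2 C"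
  have sub: "subalgebra (M \<Otimes>\<^sub>M M) (F1 \<Otimes>\<^sub>M F2)"
    by (rule subalgebra_pair_measure[OF sub1 sub2])
  interpret R: finite_measure ?R
    using finite sub by (intro finite_measure_restr_to_subalg finite_measure_pair_measure)
  have sets_N: "sets ?N = sets ?R"
    by (simp add: sets_diagonal_measure sets_restr_to_subalg[OF sub])
  have "absolutely_continuous ?R ?N"
    unfolding absolutely_continuous_def null_sets_restr_to_subalg[OF sub]
    using C null sets_diagonal_vimage by (auto simp: null_sets_def emeasure_diagonal_measure sets_diagonal_measure)
  then obtain g where g: "g \<in> borel_measurable ?R" and density_g: "density ?R g = ?N"
    using R.Radon_Nikodym_finite_measure finite_measure_diagonal_measure[OF C] sets_N by metis
  have g_finite: "AE w in ?R. g w \<noteq> \<infinity>"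
    using R.sigma_finite_iff_density_finite[OF g] density_g finite_measure_diagonal_measure[OF C]
    by (simp add: finite_measure_def)
  have g_F: "g \<in> borel_measurable (F1 \<Otimes>\<^sub>M F2)"
    using g by (simp cong: measurable_cong_sets add: sets_restr_to_subalg[OF sub])
  show ?thesis
    unfolding nonsingular_pair_within_def
  proof (intro bexI[of _ "\<lambda>w. enn2real (g w)"] conjI ballI)
    show "(\<lambda>w. enn2real (g w)) \<in> borel_measurable (M \<Otimes>\<^sub>M M)"
      using g_F sub by (intro borel_measurable_enn2real) (auto intro: borel_measurable_subalgebra simp: subalgebra_def)
    fix A B assume A: "A \<in> sets F1" and B: "B \<in> sets F2"
    then have AB: "A \<times> B \<in> sets (F1 \<Otimes>\<^sub>M F2)"
      by simp
    have "emeasure M (A \<inter> B \<inter> C) = emeasure (density ?R g) (A \<times> B)"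
      using C A B by (simp add: density_g emeasure_diagonal_measure_Times)
    also have "\<dots> = (\<integral>\<^sup>+ w \<in> A \<times> B. g w \<partial>?R)"
      using g AB by (simp add: emeasure_density sets_restr_to_subalg[OF sub])
    also have "\<dots> = (\<integral>\<^sup>+ w \<in> A \<times> B. ennreal (enn2real (g w)) \<partial>?R)"
      using g_finite by (intro nn_integral_cong_AE) (auto simp: ennreal_enn2real_if)
    also have "\<dots> = (\<integral>\<^sup>+ w \<in> A \<times> B. ennreal (enn2real (g w)) \<partial>(M \<Otimes>\<^sub>M M))"
      using g_F AB sub by (intro nn_integral_subalgebra2) (auto intro: borel_measurable_indicator)
    finally show "emeasure M (A \<inter> B \<inter> C) = (\<integral>\<^sup>+ w \<in> A \<times> B. ennreal (enn2real (g w)) \<partial>(M \<Otimes>\<^sub>M M))" .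
  qed simp
qed

lemma emeasure_pair_measure_Int_Times_eq_cond_exp:
  assumes [measurable]: "C \<in> sets M" and "S \<in> sets (F1 \<Otimes>\<^sub>M F2)"
  shows "emeasure (M \<Otimes>\<^sub>M M) (S \<inter> C \<times> C) =
    (\<integral>\<^sup>+ w \<in> S. nn_cond_exp M F1 (indicator C) (fst w) * nn_cond_exp M F2 (indicator C) (snd w) \<partial>(M \<Otimes>\<^sub>M M))"
proof -
  interpret M: finite_measure M
    by (rule finite)
  interpret c1: finite_measure_subalgebra M F1
    by unfold_locales (rule sub1)
  interpret c2: finite_measure_subalgebra M F2
    by unfold_locales (rule sub2)
  define h where "h w = nn_cond_exp M F1 (indicator C) (fst w) * nn_cond_exp M F2 (indicator C) (snd w)" for w
  have sub: "subalgebra (M \<Otimes>\<^sub>M M) (F1 \<Otimes>\<^sub>M F2)"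
    by (rule subalgebra_pair_measure[OF sub1 sub2])
  have [measurable]: "h \<in> borel_measurable (M \<Otimes>\<^sub>M M)"
    unfolding h_def by measurable
  let ?N1 = "restr_to_subalg (density (M \<Otimes>\<^sub>M M) (indicator (C \<times> C))) (F1 \<Otimes>\<^sub>M F2)"
  let ?N2 = "restr_to_subalg (density (M \<Otimes>\<^sub>M M) h) (F1 \<Otimes>\<^sub>M F2)"
  have N1: "emeasure ?N1 T = emeasure (M \<Otimes>\<^sub>M M) (T \<inter> C \<times> C)" if "T \<in> sets (F1 \<Otimes>\<^sub>M F2)" for T
  proof -
    have "T \<in> sets (M \<Otimes>\<^sub>M M)"
      using that sub by (auto simp: subalgebra_def)
    then show ?thesis
      using that sub by (simp add: emeasure_restr_to_subalg_density indicator_inter_arith[symmetric] mult.commute)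
  qed
  have "?N1 = ?N2"
  proof (rule measure_eqI_Times)
    show "sets ?N1 = sets (F1 \<Otimes>\<^sub>M F2)" and "sets ?N2 = sets (F1 \<Otimes>\<^sub>M F2)"
      using sub by (simp_all add: sets_restr_to_subalg subalgebra_def)
    show "emeasure ?N1 (space F1 \<times> space F2) \<noteq> \<infinity>"
      using N1[OF sets.top[of "F1 \<Otimes>\<^sub>M F2", unfolded space_pair_measure]]
        finite_measure.emeasure_finite[OF finite_measure_pair_measure[OF finite finite]]
      by simp
    fix A B assume A: "A \<in> sets F1" and B: "B \<in> sets F2"
    then have [measurable]: "A \<in> sets M" "B \<in> sets M"
      using sub1 sub2 by (auto simp: subalgebra_def)
    have "emeasure ?N1 (A \<times> B) = emeasure (M \<Otimes>\<^sub>M M) ((A \<inter> C) \<times> (B \<inter> C))"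
      using A B by (simp add: N1 Times_Int_Times)
    also have "\<dots> = emeasure M (A \<inter> C) * emeasure M (B \<inter> C)"
      by (simp add: M.emeasure_pair_measure_Times)
    also have "\<dots> = (\<integral>\<^sup>+ x \<in> A. nn_cond_exp M F1 (indicator C) x \<partial>M) * (\<integral>\<^sup>+ y \<in> B. nn_cond_exp M F2 (indicator C) y \<partial>M)"
      using A B by (simp add: c1.set_nn_integral_nn_cond_exp_indicator c2.set_nn_integral_nn_cond_exp_indicator)
    also have "\<dots> = (\<integral>\<^sup>+ w \<in> A \<times> B. h w \<partial>(M \<Otimes>\<^sub>M M))"
      by (subst M.nn_integral_pair_measure_mult[symmetric]) (auto simp: h_def intro!: nn_integral_cong split: split_indicator)
    also have "\<dots> = emeasure ?N2 (A \<times> B)"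
      using A B sub by (simp add: emeasure_restr_to_subalg_density)
    finally show "emeasure ?N1 (A \<times> B) = emeasure ?N2 (A \<times> B)" .
  qed
  then show ?thesis
    using N1[OF assms(2)] assms(2) sub by (simp add: emeasure_restr_to_subalg_density h_def)
qed

lemma nonsingular_pair_within_null_trace:
  assumes C [measurable]: "C \<in> sets M" and nonsingular: "nonsingular_pair_within M F1 F2 C"
    and S: "S \<in> sets (F1 \<Otimes>\<^sub>M F2)" and null: "S \<inter> C \<times> C \<in> null_sets (M \<Otimes>\<^sub>M M)"
  shows "{w \<in> space M. (w, w) \<in> S} \<inter> C \<in> null_sets M"
proof -
  interpret M: finite_measure M
    by (rule finite)
  interpret c1: finite_measure_subalgebra M F1
    by unfold_locales (rule sub1)
  interpret c2: finite_measure_subalgebra M F2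
    by unfold_locales (rule sub2)
  define p1 where "p1 = nn_cond_exp M F1 (indicator C)"
  define p2 where "p2 = nn_cond_exp M F2 (indicator C)"
  define Z1 where "Z1 = {x \<in> space M. p1 x = 0}"
  define Z2 where "Z2 = {x \<in> space M. p2 x = 0}"
  have sub: "subalgebra (M \<Otimes>\<^sub>M M) (F1 \<Otimes>\<^sub>M F2)"
    by (rule subalgebra_pair_measure[OF sub1 sub2])
  have "{x \<in> space F1. p1 x = 0} \<in> sets F1" and "{x \<in> space F2. p2 x = 0} \<in> sets F2"
    unfolding p1_def p2_def by measurable
  then have "Z1 \<in> sets F1" and "Z2 \<in> sets F2"
    using sub1 sub2 by (simp_all add: Z1_def Z2_def subalgebra_def)
  then have Z_sets: "Z1 \<times> space M \<in> sets (F1 \<Otimes>\<^sub>M F2)" "space M \<times> Z2 \<in> sets (F1 \<Otimes>\<^sub>M F2)"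
    using sub1 sub2 sets.top[of F1] sets.top[of F2] by (auto simp: subalgebra_def)
  define S' where "S' = S - (Z1 \<times> space M \<union> space M \<times> Z2)"
  have S'_sets: "S' \<in> sets (F1 \<Otimes>\<^sub>M F2)"
    using S Z_sets by (auto simp: S'_def)
  then have S'_sets_M: "S' \<in> sets (M \<Otimes>\<^sub>M M)"
    using sub by (auto simp: subalgebra_def)
  have "(\<integral>\<^sup>+ w \<in> S. p1 (fst w) * p2 (snd w) \<partial>(M \<Otimes>\<^sub>M M)) = 0"
    using emeasure_pair_measure_Int_Times_eq_cond_exp[OF C S] null by (simp add: p1_def p2_def null_sets_def)
  then have "AE w in M \<Otimes>\<^sub>M M. p1 (fst w) * p2 (snd w) * indicator S w = 0"
    using S sub by (subst (asm) nn_integral_0_iff_AE) (auto simp: p1_def p2_def subalgebra_def)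
  then have "AE w in M \<Otimes>\<^sub>M M. w \<notin> S'"
    by (rule AE_mp) (auto simp: S'_def Z1_def Z2_def space_pair_measure split: split_indicator)
  then have "S' \<in> null_sets (M \<Otimes>\<^sub>M M)"
    using AE_iff_null_sets[OF S'_sets_M] by simp
  then have "{w \<in> space M. (w, w) \<in> S'} \<inter> C \<in> null_sets M"
    by (rule nonsingular_pair_withinD[OF C nonsingular S'_sets])
  moreover have "Z1 \<inter> C \<in> null_sets M" and "Z2 \<inter> C \<in> null_sets M"
    using c1.emeasure_nn_cond_exp_indicator_zero[OF C] c2.emeasure_nn_cond_exp_indicator_zero[OF C]
    by (auto simp: null_sets_def Z1_def Z2_def p1_def p2_def)
  ultimately show ?thesis
    using sets_diagonal_vimage[OF S]
    by (rule_tac null_sets_subset[where B = "({w \<in> space M. (w, w) \<in> S'} \<inter> C) \<union> (Z1 \<inter> C) \<union> (Z2 \<inter> C)"])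
       (auto simp: S'_def)
qed

lemma nonsingular_pair_within_subset:
  assumes "C' \<in> sets M" and "C \<in> sets M" and "C' \<subseteq> C"
    and "nonsingular_pair_within M F1 F2 C"
  shows "nonsingular_pair_within M F1 F2 C'"
proof (rule nonsingular_pair_withinI[OF assms(1)])
  fix S assume S: "S \<in> sets (F1 \<Otimes>\<^sub>M F2)" and null: "S \<in> null_sets (M \<Otimes>\<^sub>M M)"
  have "{w \<in> space M. (w, w) \<in> S} \<inter> C \<in> null_sets M"
    by (rule nonsingular_pair_withinD[OF assms(2,4) S null])
  moreover have "{w \<in> space M. (w, w) \<in> S} \<inter> C' \<in> sets M"
    using sets_diagonal_vimage[OF S] assms(1) by (rule sets.Int)
  ultimately show "{w \<in> space M. (w, w) \<in> S} \<inter> C' \<in> null_sets M"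
    by (rule null_sets_subset) (use assms(3) in blast)
qed

lemma nonsingular_pair_within_UN:
  fixes Cs :: "'i::countable \<Rightarrow> 'a set"
  assumes "\<And>k. Cs k \<in> sets M" and "\<And>k. nonsingular_pair_within M F1 F2 (Cs k)"
  shows "nonsingular_pair_within M F1 F2 (\<Union>k. Cs k)"
proof (rule nonsingular_pair_withinI)
  show "(\<Union>k. Cs k) \<in> sets M"
    by (rule sets.countable_UN) (use assms(1) in blast)
  fix S assume S: "S \<in> sets (F1 \<Otimes>\<^sub>M F2)" and null: "S \<in> null_sets (M \<Otimes>\<^sub>M M)"
  have "(\<Union>k. {w \<in> space M. (w, w) \<in> S} \<inter> Cs k) \<in> null_sets M"
    using nonsingular_pair_withinD[OF assms(1,2) S null] by (rule null_sets_UN)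
  then show "{w \<in> space M. (w, w) \<in> S} \<inter> (\<Union>k. Cs k) \<in> null_sets M"
    by (simp only: Int_UN_distrib)
qed

end

lemma nonsingular_pair_within_trace_subalgebra:
  assumes finite: "finite_measure M" and sub1: "subalgebra M F1" and sub2: "subalgebra M F2"
    and E: "subalgebra M E" and C: "C \<in> sets M"
    and trace: "\<And>X. X \<in> sets E \<Longrightarrow> \<exists>A \<in> sets F1. A \<inter> C = X \<inter> C"
    and nonsingular: "nonsingular_pair_within M F1 F2 C"
  shows "nonsingular_pair_within M E F2 C"
proof (rule nonsingular_pair_withinI[OF finite E sub2 C])
  fix T assume T: "T \<in> sets (E \<Otimes>\<^sub>M F2)" and null: "T \<in> null_sets (M \<Otimes>\<^sub>M M)"
  have spaces: "space E = space F1" "space F1 = space M" "space F2 = space M"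
    using E sub1 sub2 by (simp_all add: subalgebra_def)
  have C_space: "C \<subseteq> space M"
    using C by (rule sets.sets_into_space)
  obtain S where S: "S \<in> sets (F1 \<Otimes>\<^sub>M F2)" and same_trace: "T \<inter> (C \<times> space F2) = S \<inter> (C \<times> space F2)"
    using ex_sets_pair_measure_same_trace[OF _ _ trace T] spaces C_space by metis
  have Times_eq: "T \<inter> C \<times> C = S \<inter> C \<times> C"
  proof -
    have "T \<inter> C \<times> C = (T \<inter> (C \<times> space F2)) \<inter> C \<times> C" and "S \<inter> C \<times> C = (S \<inter> (C \<times> space F2)) \<inter> C \<times> C"
      using C_space spaces by auto
    then show ?thesis
      by (simp only: same_trace)
  qed
  have "T \<inter> C \<times> C \<in> null_sets (M \<Otimes>\<^sub>M M)"
    using null C by (intro null_sets_subset[OF null]) auto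
  then have "{w \<in> space M. (w, w) \<in> S} \<inter> C \<in> null_sets M"
    using nonsingular_pair_within_null_trace[OF finite sub1 sub2 C nonsingular S] Times_eq by simp
  moreover have "{w \<in> space M. (w, w) \<in> T} \<inter> C = {w \<in> space M. (w, w) \<in> S} \<inter> C"
    using Times_eq by blast
  ultimately show "{w \<in> space M. (w, w) \<in> T} \<inter> C \<in> null_sets M"
    by simp
qed

theorem lemma5p6:
  fixes M F1 F2 :: "'a measure"
  assumes "prob_space M"
    and "subalgebra M F1" and "subalgebra M F2"
  shows "(\<forall>C1 C2. C1 \<in> sets M \<longrightarrow> C2 \<in> sets M \<longrightarrow> C1 \<subseteq> C2 \<longrightarrow>
           nonsingular_pair_within M F1 F2 C2 \<longrightarrow> nonsingular_pair_within M F1 F2 C1) \<and>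
         (\<forall>(Cs :: nat \<Rightarrow> 'a set) C. (\<forall>k. Cs k \<in> sets M) \<longrightarrow> disjoint_family Cs \<longrightarrow>
           C = (\<Union>k. Cs k) \<longrightarrow> (\<forall>k. nonsingular_pair_within M F1 F2 (Cs k)) \<longrightarrow>
           nonsingular_pair_within M F1 F2 C) \<and>
         (\<forall>C E1. C \<in> sets M \<longrightarrow> subalgebra M E1 \<longrightarrow>
           (\<forall>E \<in> sets E1. \<exists>A \<in> sets F1. A \<inter> C = E \<inter> C) \<longrightarrow>
           nonsingular_pair_within M F1 F2 C \<longrightarrow> nonsingular_pair_within M E1 F2 C)"
proof -
  have finite: "finite_measure M"
    using assms(1) by (rule prob_space.finite_measure)
  show ?thesis
  proof (intro conjI allI impI)
    fix C1 C2 assume "C1 \<in> sets M" "C2 \<in> sets M" "C1 \<subseteq> C2" "nonsingular_pair_within M F1 F2 C2"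
    then show "nonsingular_pair_within M F1 F2 C1"
      by (rule nonsingular_pair_within_subset[OF finite assms(2,3)])
  next
    fix Cs :: "nat \<Rightarrow> 'a set" and C
    assume Cs: "\<forall>k. Cs k \<in> sets M" and C: "C = (\<Union>k. Cs k)"
      and nonsingular: "\<forall>k. nonsingular_pair_within M F1 F2 (Cs k)"
    show "nonsingular_pair_within M F1 F2 C"
      unfolding C by (rule nonsingular_pair_within_UN[OF finite assms(2,3)]) (use Cs nonsingular in blast)+
  next
    fix C E1 assume C: "C \<in> sets M" and E1: "subalgebra M E1"
      and trace: "\<forall>E \<in> sets E1. \<exists>A \<in> sets F1. A \<inter> C = E \<inter> C"
      and nonsingular: "nonsingular_pair_within M F1 F2 C"
    show "nonsingular_pair_within M E1 F2 C"
      by (rule nonsingular_pair_within_trace_subalgebra[OF finite assms(2,3) E1 C _ nonsingular])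
        (use trace in blast)
  qed
qed

end
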